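(* Let $R$ be a unital ring, let $\mathcal{F}_1\subseteq\mathcal{F}_2$ be Gabriel filters of right ideals of $R$, let $\Delta=\{\delta_n\}_{n\in\omega}$ be a higher derivation on $R$, let $M$ be a right $R$-module and $D=\{d_n\}_{n\in\omega}$ a higher $\Delta$-derivation on $M$. For $k=1,2$ let $\{d^{(k)}_n\}_{n\in\omega}$ be the (unique) higher $\Delta$-derivation on $M_{\mathcal{F}_k}$ extending $D$, i.e. with $d^{(k)}_n\circ q_k=q_k\circ d_n$ for all $n$. Then these extensions agree: $q_{12}\circ d^{(1)}_n=d^{(2)}_n\circ q_{12}$ for every $n$.
   Context: A Gabriel filter $\mathcal{F}$ corresponds to a hereditary torsion theory with torsion class $\mathcal{T}=\{N\mid \mathrm{ann}(x)\in\mathcal{F}\ \text{for all } x\in N\}$; $\mathcal{T}(M)$ denotes the largest torsion submodule of $M$. The module of quotients $M_{\mathcal{F}}$ is the largest submodule $N$ of the injective envelope $E(M/\mathcal{T}(M))$ with $N/(M/\mathcal{T}(M))$ torsion, and $q_M:M\to M_{\mathcal{F}}$ is the projection $M\to M/\mathcal{T}(M)$ followed by inclusion. Here $q_k=q_M:M\to M_{\mathcal{F}_k}$, and $q_{12}:M_{\mathcal{F}_1}\to M_{\mathcal{F}_2}$ is the canonical map induced by the inclusion $\mathcal{F}_1\subseteq\mathcal{F}_2$, satisfying $q_{12}q_1=q_2$. A higher derivation on $R$ is a family $\{\delta_n\}$ of additive maps with $\delta_0=\mathrm{id}_R$ and $\delta_n(rs)=\sum_{i=0}^n\delta_i(r)\delta_{n-i}(s)$;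 a higher $\Delta$-derivation on a right module $N$ is a family $\{d_n\}$ of additive maps with $d_0=\mathrm{id}_N$ and $d_n(xr)=\sum_{i=0}^n d_i(x)\delta_{n-i}(r)$. Every higher $\Delta$-derivation on $M$ extends uniquely to a higher $\Delta$-derivation on $M_{\mathcal{F}}$ commuting with $q_M$. *)

theory Defs
  imports "HOL-Algebra.Ideal"
begin

record ('a, 'b) rmodule = "'b ring" +
  rsmult :: "'b \<Rightarrow> 'a \<Rightarrow> 'b"  (infixl \<open>\<odot>\<index>\<close> 70)

definition right_module :: "('a, 'm) ring_scheme \<Rightarrow> ('a, 'b, 'c) rmodule_scheme \<Rightarrow> bool" where
  "right_module R M \<longleftrightarrow> ring R \<and> abelian_group M \<and>
     (\<forall>x\<in>carrier M. \<forall>r\<in>carrier R. x \<odot>\<^bsub>M\<^esub> r \<in> carrier M) \<and>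
     (\<forall>x\<in>carrier M. \<forall>y\<in>carrier M. \<forall>r\<in>carrier R.
        (x \<oplus>\<^bsub>M\<^esub> y) \<odot>\<^bsub>M\<^esub> r = x \<odot>\<^bsub>M\<^esub> r \<oplus>\<^bsub>M\<^esub> y \<odot>\<^bsub>M\<^esub> r) \<and>
     (\<forall>x\<in>carrier M. \<forall>r\<in>carrier R. \<forall>s\<in>carrier R.
        x \<odot>\<^bsub>M\<^esub> (r \<oplus>\<^bsub>R\<^esub> s) = x \<odot>\<^bsub>M\<^esub> r \<oplus>\<^bsub>M\<^esub> x \<odot>\<^bsub>M\<^esub> s) \<and>
     (\<forall>x\<in>carrier M. \<forall>r\<in>carrier R. \<forall>s\<in>carrier R.
        x \<odot>\<^bsub>M\<^esub> (r \<otimes>\<^bsub>R\<^esub> s) = (x \<odot>\<^bsub>M\<^esub> r) \<odot>\<^bsub>M\<^esub> s) \<and>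
     (\<forall>x\<in>carrier M. x \<odot>\<^bsub>M\<^esub> \<one>\<^bsub>R\<^esub> = x)"

definition submodule :: "('a, 'm) ring_scheme \<Rightarrow> 'b set \<Rightarrow> ('a, 'b, 'c) rmodule_scheme \<Rightarrow> bool" where
  "submodule R S M \<longleftrightarrow> S \<subseteq> carrier M \<and> \<zero>\<^bsub>M\<^esub> \<in> S \<and>
     (\<forall>x\<in>S. \<forall>y\<in>S. x \<oplus>\<^bsub>M\<^esub> y \<in> S) \<and> (\<forall>x\<in>S. \<ominus>\<^bsub>M\<^esub> x \<in> S) \<and>
     (\<forall>x\<in>S. \<forall>r\<in>carrier R. x \<odot>\<^bsub>M\<^esub> r \<in> S)"

definition rmod_hom :: "('a, 'm) ring_scheme \<Rightarrow> ('a, 'b, 'c) rmodule_scheme \<Rightarrow> ('a, 'd, 'e) rmodule_scheme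
     \<Rightarrow> ('b \<Rightarrow> 'd) \<Rightarrow> bool" where
  "rmod_hom R M N f \<longleftrightarrow>
     (\<forall>x\<in>carrier M. f x \<in> carrier N) \<and>
     (\<forall>x\<in>carrier M. \<forall>y\<in>carrier M. f (x \<oplus>\<^bsub>M\<^esub> y) = f x \<oplus>\<^bsub>N\<^esub> f y) \<and>
     (\<forall>x\<in>carrier M. \<forall>r\<in>carrier R. f (x \<odot>\<^bsub>M\<^esub> r) = f x \<odot>\<^bsub>N\<^esub> r)"

definition right_ideal :: "'a set \<Rightarrow> ('a, 'm) ring_scheme \<Rightarrow> bool" where
  "right_ideal I R \<longleftrightarrow> additive_subgroup I R \<and> (\<forall>a\<in>I. \<forall>r\<in>carrier R. a \<otimes>\<^bsub>R\<^esub> r \<in> I)"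

definition rquot :: "('a, 'm) ring_scheme \<Rightarrow> 'a set \<Rightarrow> 'a \<Rightarrow> 'a set" where
  "rquot R I a = {r \<in> carrier R. a \<otimes>\<^bsub>R\<^esub> r \<in> I}"

definition gabriel_filter :: "('a, 'm) ring_scheme \<Rightarrow> 'a set set \<Rightarrow> bool" where
  "gabriel_filter R F \<longleftrightarrow>
     (\<forall>I\<in>F. right_ideal I R) \<and> carrier R \<in> F \<and>
     (\<forall>I\<in>F. \<forall>J. right_ideal J R \<and> I \<subseteq> J \<longrightarrow> J \<in> F) \<and>
     (\<forall>I\<in>F. \<forall>J\<in>F. I \<inter> J \<in> F) \<and>
     (\<forall>I\<in>F. \<forall>a\<in>carrier R. rquot R I a \<in> F) \<and>
     (\<forall>I J. right_ideal I R \<and> J \<in> F \<and> (\<forall>a\<in>J. rquot R I a \<in> F) \<longrightarrow> I \<in> F)"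

definition ann :: "('a, 'm) ring_scheme \<Rightarrow> ('a, 'b, 'c) rmodule_scheme \<Rightarrow> 'b \<Rightarrow> 'a set" where
  "ann R M x = {r \<in> carrier R. x \<odot>\<^bsub>M\<^esub> r = \<zero>\<^bsub>M\<^esub>}"

definition tors :: "('a, 'm) ring_scheme \<Rightarrow> 'a set set \<Rightarrow> ('a, 'b, 'c) rmodule_scheme \<Rightarrow> 'b set" where
  "tors R F M = {x \<in> carrier M. ann R M x \<in> F}"

definition essential :: "('a, 'm) ring_scheme \<Rightarrow> 'b set \<Rightarrow> ('a, 'b, 'c) rmodule_scheme \<Rightarrow> bool" where
  "essential R X E \<longleftrightarrow> submodule R X E \<and>
     (\<forall>S. submodule R S E \<and> S \<noteq> {\<zero>\<^bsub>E\<^esub>} \<longrightarrow> S \<inter> X \<noteq> {\<zero>\<^bsub>E\<^esub>})"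

text \<open>Injectivity (stated via Baer's criterion).\<close>
definition injective_mod :: "('a, 'm) ring_scheme \<Rightarrow> ('a, 'b, 'c) rmodule_scheme \<Rightarrow> bool" where
  "injective_mod R E \<longleftrightarrow> right_module R E \<and>
     (\<forall>I f. right_ideal I R \<and> (\<forall>a\<in>I. f a \<in> carrier E) \<and>
        (\<forall>a\<in>I. \<forall>b\<in>I. f (a \<oplus>\<^bsub>R\<^esub> b) = f a \<oplus>\<^bsub>E\<^esub> f b) \<and>
        (\<forall>a\<in>I. \<forall>r\<in>carrier R. f (a \<otimes>\<^bsub>R\<^esub> r) = f a \<odot>\<^bsub>E\<^esub> r)
      \<longrightarrow> (\<exists>e\<in>carrier E. \<forall>a\<in>I. f a = e \<odot>\<^bsub>E\<^esub> a))"

text \<open>(E, j) is an injective envelope of M/T(M), where j : M \<rightarrow> E is the projection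
  M \<rightarrow> M/T(M) followed by the inclusion: j is R-linear with kernel T(M),
  E is injective and j(M) is essential in E.\<close>
definition env_of_torsfree_quot ::
  "('a, 'm) ring_scheme \<Rightarrow> 'a set set \<Rightarrow> ('a, 'b, 'c) rmodule_scheme \<Rightarrow> ('a, 'd, 'e) rmodule_scheme
     \<Rightarrow> ('b \<Rightarrow> 'd) \<Rightarrow> bool" where
  "env_of_torsfree_quot R F M E j \<longleftrightarrow> injective_mod R E \<and> rmod_hom R M E j \<and>
     {x \<in> carrier M. j x = \<zero>\<^bsub>E\<^esub>} = tors R F M \<and> essential R (j ` carrier M) E"

text \<open>Carrier of M_F inside E: the largest submodule N of E with N/j(M) torsion.\<close>
definition quot_carrier ::
  "('a, 'm) ring_scheme \<Rightarrow> 'a set set \<Rightarrow> ('a, 'b, 'c) rmodule_scheme \<Rightarrow> ('a, 'd, 'e) rmodule_scheme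
     \<Rightarrow> ('b \<Rightarrow> 'd) \<Rightarrow> 'd set" where
  "quot_carrier R F M E j = {y \<in> carrier E. {r \<in> carrier R. y \<odot>\<^bsub>E\<^esub> r \<in> j ` carrier M} \<in> F}"

definition mod_of_quot ::
  "('a, 'm) ring_scheme \<Rightarrow> 'a set set \<Rightarrow> ('a, 'b, 'c) rmodule_scheme \<Rightarrow> ('a, 'd, 'e) rmodule_scheme
     \<Rightarrow> ('b \<Rightarrow> 'd) \<Rightarrow> ('a, 'd, 'e) rmodule_scheme" where
  "mod_of_quot R F M E j = E\<lparr>carrier := quot_carrier R F M E j\<rparr>"

definition higher_derivation :: "('a, 'm) ring_scheme \<Rightarrow> (nat \<Rightarrow> 'a \<Rightarrow> 'a) \<Rightarrow> bool" where
  "higher_derivation R \<delta> \<longleftrightarrow>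
     (\<forall>n. \<forall>r\<in>carrier R. \<delta> n r \<in> carrier R) \<and>
     (\<forall>n. \<forall>r\<in>carrier R. \<forall>s\<in>carrier R. \<delta> n (r \<oplus>\<^bsub>R\<^esub> s) = \<delta> n r \<oplus>\<^bsub>R\<^esub> \<delta> n s) \<and>
     (\<forall>r\<in>carrier R. \<delta> 0 r = r) \<and>
     (\<forall>n. \<forall>r\<in>carrier R. \<forall>s\<in>carrier R.
        \<delta> n (r \<otimes>\<^bsub>R\<^esub> s) = finsum R (\<lambda>i. \<delta> i r \<otimes>\<^bsub>R\<^esub> \<delta> (n - i) s) {..n})"

definition higher_delta_derivation ::
  "('a, 'm) ring_scheme \<Rightarrow> (nat \<Rightarrow> 'a \<Rightarrow> 'a) \<Rightarrow> ('a, 'b, 'c) rmodule_scheme \<Rightarrow> (nat \<Rightarrow> 'b \<Rightarrow> 'b) \<Rightarrow> bool" where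
  "higher_delta_derivation R \<delta> N d \<longleftrightarrow>
     (\<forall>n. \<forall>x\<in>carrier N. d n x \<in> carrier N) \<and>
     (\<forall>n. \<forall>x\<in>carrier N. \<forall>y\<in>carrier N. d n (x \<oplus>\<^bsub>N\<^esub> y) = d n x \<oplus>\<^bsub>N\<^esub> d n y) \<and>
     (\<forall>x\<in>carrier N. d 0 x = x) \<and>
     (\<forall>n. \<forall>x\<in>carrier N. \<forall>r\<in>carrier R.
        d n (x \<odot>\<^bsub>N\<^esub> r) = finsum N (\<lambda>i. d i x \<odot>\<^bsub>N\<^esub> \<delta> (n - i) r) {..n})"

end

theory Submission
  imports Defs
begin

text \<open>The right ideal I = {r. x r \<in> j1(M)} lies in F1, hence in F2,
  and for r \<in> I the element x r comes from M, where both extensions are known to agree. Expanding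
  both sides of q12 (d1_n (x r)) = d2_n (q12 (x r)) by the Leibniz rule, the induction hypothesis
  cancels all terms but the top one, so q12 (d1_n x) and d2_n (q12 x) agree after multiplication by
  every r \<in> I. Their difference is therefore F2-torsion in the injective envelope of the
  F2-torsionfree module M/T2(M), and such an envelope has no nonzero F2-torsion.\<close>

lemma additive_subgroup_closedI:
  assumes "abelian_group G" "H \<subseteq> carrier G" "\<zero>\<^bsub>G\<^esub> \<in> H"
    "\<And>a. a \<in> H \<Longrightarrow> \<ominus>\<^bsub>G\<^esub> a \<in> H" "\<And>a b. a \<in> H \<Longrightarrow> b \<in> H \<Longrightarrow> a \<oplus>\<^bsub>G\<^esub> b \<in> H"
  shows "additive_subgroup H G"
proof -
  interpret abelian_group G by fact
  show ?thesis
    by (rule additive_subgroupI, rule add.subgroupI) (use assms in auto)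
qed

lemma finsum_hom:
  assumes G: "abelian_group G" and H: "abelian_group H"
    and h_closed: "\<And>x. x \<in> carrier G \<Longrightarrow> h x \<in> carrier H"
    and h_add: "\<And>x y. x \<in> carrier G \<Longrightarrow> y \<in> carrier G \<Longrightarrow> h (x \<oplus>\<^bsub>G\<^esub> y) = h x \<oplus>\<^bsub>H\<^esub> h y"
    and "finite A" and "f \<in> A \<rightarrow> carrier G"
  shows "h (finsum G f A) = finsum H (h \<circ> f) A"
proof -
  interpret G: abelian_group G by fact
  interpret H: abelian_group H by fact
  have h_zero: "h \<zero>\<^bsub>G\<^esub> = \<zero>\<^bsub>H\<^esub>"
  proof -
    have "h \<zero>\<^bsub>G\<^esub> \<oplus>\<^bsub>H\<^esub> h \<zero>\<^bsub>G\<^esub> = \<zero>\<^bsub>H\<^esub> \<oplus>\<^bsub>H\<^esub> h \<zero>\<^bsub>G\<^esub>"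
      using h_add[of "\<zero>\<^bsub>G\<^esub>" "\<zero>\<^bsub>G\<^esub>"] h_closed[of "\<zero>\<^bsub>G\<^esub>"] by simp
    then show ?thesis using h_closed[of "\<zero>\<^bsub>G\<^esub>"] by (simp add: H.add.right_cancel)
  qed
  from \<open>finite A\<close> \<open>f \<in> A \<rightarrow> carrier G\<close> show ?thesis
  proof (induction A rule: finite_induct)
    case empty
    then show ?case by (simp add: h_zero)
  next
    case (insert a A)
    then have "f a \<in> carrier G" "f \<in> A \<rightarrow> carrier G" by auto
    with insert show ?case
      using h_closed by (auto simp: h_add G.finsum_closed Pi_iff)
  qed
qed

lemma finsum_atMost_eq_last:
  fixes n :: nat
  assumes "abelian_group G" and "f \<in> {..n} \<rightarrow> carrier G" and "g \<in> {..n} \<rightarrow> carrier G"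
    and "\<And>i. i < n \<Longrightarrow> f i = g i" and "finsum G f {..n} = finsum G g {..n}"
  shows "f n = g n"
proof -
  interpret abelian_group G by fact
  have split: "finsum G k {..n} = k n \<oplus>\<^bsub>G\<^esub> finsum G k {..<n}" if "k \<in> {..n} \<rightarrow> carrier G" for k
  proof -
    have "{..n} = insert n {..<n}" by auto
    then show ?thesis using that by (simp add: Pi_iff)
  qed
  have "finsum G f {..<n} = finsum G g {..<n}"
    by (rule finsum_cong') (use assms in \<open>auto simp: Pi_iff\<close>)
  then have "f n \<oplus>\<^bsub>G\<^esub> finsum G g {..<n} = g n \<oplus>\<^bsub>G\<^esub> finsum G g {..<n}"
    using assms(5) split[OF assms(2)] split[OF assms(3)] by simp
  moreover have "finsum G g {..<n} \<in> carrier G" by (rule finsum_closed) (use assms(3) in auto)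
  ultimately show ?thesis using assms(2,3) by (simp add: Pi_iff)
qed

context
  fixes R :: "('a, 'm) ring_scheme" and E :: "('a, 'b, 'c) rmodule_scheme"
  assumes E: "right_module R E"
begin

lemma rmod_ring: "ring R"
  and rmod_abelian_group: "abelian_group E"
  using E by (auto simp: right_module_def)

lemma rmod_smult_closed: "x \<in> carrier E \<Longrightarrow> r \<in> carrier R \<Longrightarrow> x \<odot>\<^bsub>E\<^esub> r \<in> carrier E"
  and rmod_add_smult: "x \<in> carrier E \<Longrightarrow> y \<in> carrier E \<Longrightarrow> r \<in> carrier R \<Longrightarrow>
        (x \<oplus>\<^bsub>E\<^esub> y) \<odot>\<^bsub>E\<^esub> r = x \<odot>\<^bsub>E\<^esub> r \<oplus>\<^bsub>E\<^esub> y \<odot>\<^bsub>E\<^esub> r"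
  and rmod_smult_add: "x \<in> carrier E \<Longrightarrow> r \<in> carrier R \<Longrightarrow> s \<in> carrier R \<Longrightarrow>
        x \<odot>\<^bsub>E\<^esub> (r \<oplus>\<^bsub>R\<^esub> s) = x \<odot>\<^bsub>E\<^esub> r \<oplus>\<^bsub>E\<^esub> x \<odot>\<^bsub>E\<^esub> s"
  and rmod_smult_assoc: "x \<in> carrier E \<Longrightarrow> r \<in> carrier R \<Longrightarrow> s \<in> carrier R \<Longrightarrow>
        x \<odot>\<^bsub>E\<^esub> (r \<otimes>\<^bsub>R\<^esub> s) = (x \<odot>\<^bsub>E\<^esub> r) \<odot>\<^bsub>E\<^esub> s"
  and rmod_smult_one: "x \<in> carrier E \<Longrightarrow> x \<odot>\<^bsub>E\<^esub> \<one>\<^bsub>R\<^esub> = x"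
  using E by (auto simp: right_module_def)

lemma rmod_smult_zero: "x \<in> carrier E \<Longrightarrow> x \<odot>\<^bsub>E\<^esub> \<zero>\<^bsub>R\<^esub> = \<zero>\<^bsub>E\<^esub>"
proof -
  assume x: "x \<in> carrier E"
  interpret R: ring R by (rule rmod_ring)
  interpret E: abelian_group E by (rule rmod_abelian_group)
  have "x \<odot>\<^bsub>E\<^esub> \<zero>\<^bsub>R\<^esub> \<oplus>\<^bsub>E\<^esub> x \<odot>\<^bsub>E\<^esub> \<zero>\<^bsub>R\<^esub> = \<zero>\<^bsub>E\<^esub> \<oplus>\<^bsub>E\<^esub> x \<odot>\<^bsub>E\<^esub> \<zero>\<^bsub>R\<^esub>"
    using rmod_smult_add[OF x, of "\<zero>\<^bsub>R\<^esub>" "\<zero>\<^bsub>R\<^esub>"] rmod_smult_closed[OF x] by simp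
  then show ?thesis using rmod_smult_closed[OF x] by (simp add: E.add.right_cancel)
qed

lemma rmod_zero_smult: "r \<in> carrier R \<Longrightarrow> \<zero>\<^bsub>E\<^esub> \<odot>\<^bsub>E\<^esub> r = \<zero>\<^bsub>E\<^esub>"
proof -
  assume r: "r \<in> carrier R"
  interpret E: abelian_group E by (rule rmod_abelian_group)
  have "\<zero>\<^bsub>E\<^esub> \<odot>\<^bsub>E\<^esub> r \<oplus>\<^bsub>E\<^esub> \<zero>\<^bsub>E\<^esub> \<odot>\<^bsub>E\<^esub> r = \<zero>\<^bsub>E\<^esub> \<oplus>\<^bsub>E\<^esub> \<zero>\<^bsub>E\<^esub> \<odot>\<^bsub>E\<^esub> r"
    using rmod_add_smult[of "\<zero>\<^bsub>E\<^esub>" "\<zero>\<^bsub>E\<^esub>" r] rmod_smult_closed r by simp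
  then show ?thesis using rmod_smult_closed r by (simp add: E.add.right_cancel)
qed

lemma rmod_smult_uminus:
  "x \<in> carrier E \<Longrightarrow> r \<in> carrier R \<Longrightarrow> x \<odot>\<^bsub>E\<^esub> (\<ominus>\<^bsub>R\<^esub> r) = \<ominus>\<^bsub>E\<^esub> (x \<odot>\<^bsub>E\<^esub> r)"
proof -
  assume x: "x \<in> carrier E" and r: "r \<in> carrier R"
  interpret R: ring R by (rule rmod_ring)
  interpret E: abelian_group E by (rule rmod_abelian_group)
  have "x \<odot>\<^bsub>E\<^esub> (\<ominus>\<^bsub>R\<^esub> r) \<oplus>\<^bsub>E\<^esub> x \<odot>\<^bsub>E\<^esub> r = \<zero>\<^bsub>E\<^esub>"
    using rmod_smult_add[OF x, of "\<ominus>\<^bsub>R\<^esub> r" r] r rmod_smult_zero[OF x] by (simp add: R.l_neg)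
  then show ?thesis using E.minus_equality rmod_smult_closed x r by simp
qed

lemma rmod_uminus_smult:
  "x \<in> carrier E \<Longrightarrow> r \<in> carrier R \<Longrightarrow> (\<ominus>\<^bsub>E\<^esub> x) \<odot>\<^bsub>E\<^esub> r = \<ominus>\<^bsub>E\<^esub> (x \<odot>\<^bsub>E\<^esub> r)"
proof -
  assume x: "x \<in> carrier E" and r: "r \<in> carrier R"
  interpret E: abelian_group E by (rule rmod_abelian_group)
  have "(\<ominus>\<^bsub>E\<^esub> x) \<odot>\<^bsub>E\<^esub> r \<oplus>\<^bsub>E\<^esub> x \<odot>\<^bsub>E\<^esub> r = \<zero>\<^bsub>E\<^esub>"
    using rmod_add_smult[of "\<ominus>\<^bsub>E\<^esub> x" x r] r x rmod_zero_smult[OF r] by (simp add: E.l_neg)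
  then show ?thesis using E.minus_equality rmod_smult_closed x r by simp
qed

lemma rmod_minus_smult:
  "x \<in> carrier E \<Longrightarrow> y \<in> carrier E \<Longrightarrow> r \<in> carrier R \<Longrightarrow>
     (x \<ominus>\<^bsub>E\<^esub> y) \<odot>\<^bsub>E\<^esub> r = x \<odot>\<^bsub>E\<^esub> r \<ominus>\<^bsub>E\<^esub> y \<odot>\<^bsub>E\<^esub> r"
  using rmod_add_smult rmod_uminus_smult abelian_group.a_inv_closed[OF rmod_abelian_group]
  by (simp add: a_minus_def)

lemma right_ideal_smult_preimage:
  assumes y: "y \<in> carrier E" and S: "submodule R S E"
  shows "right_ideal {r \<in> carrier R. y \<odot>\<^bsub>E\<^esub> r \<in> S} R"
proof -
  interpret R: ring R by (rule rmod_ring)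
  show ?thesis
    unfolding right_ideal_def
  proof
    show "additive_subgroup {r \<in> carrier R. y \<odot>\<^bsub>E\<^esub> r \<in> S} R"
      using S by (intro additive_subgroup_closedI)
        (auto simp: R.is_abelian_group submodule_def rmod_smult_zero[OF y] rmod_smult_uminus[OF y]
          rmod_smult_add[OF y])
    show "\<forall>a\<in>{r \<in> carrier R. y \<odot>\<^bsub>E\<^esub> r \<in> S}. \<forall>r\<in>carrier R. a \<otimes>\<^bsub>R\<^esub> r \<in> {r \<in> carrier R. y \<odot>\<^bsub>E\<^esub> r \<in> S}"
      using S by (auto simp: submodule_def rmod_smult_assoc[OF y])
  qed
qed

lemma submodule_zero: "submodule R {\<zero>\<^bsub>E\<^esub>} E"
proof -
  interpret abelian_group E by (rule rmod_abelian_group)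
  show ?thesis by (simp add: submodule_def rmod_zero_smult)
qed

lemma ann_right_ideal: "x \<in> carrier E \<Longrightarrow> right_ideal (ann R E x) R"
  using right_ideal_smult_preimage[OF _ submodule_zero] by (simp add: ann_def)

lemma rquot_ann:
  "x \<in> carrier E \<Longrightarrow> a \<in> carrier R \<Longrightarrow> rquot R (ann R E x) a = ann R E (x \<odot>\<^bsub>E\<^esub> a)"
  using rmod_ring by (auto simp: rquot_def ann_def rmod_smult_assoc ring.ring_simprules(5))

lemma submodule_cyclic:
  assumes y: "y \<in> carrier E"
  shows "submodule R {y \<odot>\<^bsub>E\<^esub> r | r. r \<in> carrier R} E"
proof -
  interpret R: ring R by (rule rmod_ring)
  show ?thesis
    unfolding submodule_def
  proof (intro conjI ballI)
    show "{y \<odot>\<^bsub>E\<^esub> r |r. r \<in> carrier R} \<subseteq> carrier E" using rmod_smult_closed[OF y] by auto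
    show "\<zero>\<^bsub>E\<^esub> \<in> {y \<odot>\<^bsub>E\<^esub> r |r. r \<in> carrier R}"
      using rmod_smult_zero[OF y] R.zero_closed by force
  next
    fix a b assume "a \<in> {y \<odot>\<^bsub>E\<^esub> r |r. r \<in> carrier R}" "b \<in> {y \<odot>\<^bsub>E\<^esub> r |r. r \<in> carrier R}"
    then show "a \<oplus>\<^bsub>E\<^esub> b \<in> {y \<odot>\<^bsub>E\<^esub> r |r. r \<in> carrier R}"
      using rmod_smult_add[OF y] R.add.m_closed by (smt (verit) mem_Collect_eq)
  next
    fix a assume "a \<in> {y \<odot>\<^bsub>E\<^esub> r |r. r \<in> carrier R}"
    then show "\<ominus>\<^bsub>E\<^esub> a \<in> {y \<odot>\<^bsub>E\<^esub> r |r. r \<in> carrier R}"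
      using rmod_smult_uminus[OF y] R.add.inv_closed by (smt (verit) mem_Collect_eq)
  next
    fix a s assume "a \<in> {y \<odot>\<^bsub>E\<^esub> r |r. r \<in> carrier R}" "s \<in> carrier R"
    then show "a \<odot>\<^bsub>E\<^esub> s \<in> {y \<odot>\<^bsub>E\<^esub> r |r. r \<in> carrier R}"
      using rmod_smult_assoc[OF y] R.m_closed by (smt (verit) mem_Collect_eq)
  qed
qed

end

lemma gabriel_filter_right_ideal: "gabriel_filter R F \<Longrightarrow> I \<in> F \<Longrightarrow> right_ideal I R"
  and gabriel_filter_carrier: "gabriel_filter R F \<Longrightarrow> carrier R \<in> F"
  and gabriel_filter_mono:
    "gabriel_filter R F \<Longrightarrow> I \<in> F \<Longrightarrow> right_ideal J R \<Longrightarrow> I \<subseteq> J \<Longrightarrow> J \<in> F"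
  and gabriel_filter_Int: "gabriel_filter R F \<Longrightarrow> I \<in> F \<Longrightarrow> J \<in> F \<Longrightarrow> I \<inter> J \<in> F"
  and gabriel_filter_rquot:
    "gabriel_filter R F \<Longrightarrow> I \<in> F \<Longrightarrow> a \<in> carrier R \<Longrightarrow> rquot R I a \<in> F"
  and gabriel_filter_transitive:
    "gabriel_filter R F \<Longrightarrow> right_ideal I R \<Longrightarrow> J \<in> F \<Longrightarrow> (\<And>a. a \<in> J \<Longrightarrow> rquot R I a \<in> F)
      \<Longrightarrow> I \<in> F"
  unfolding gabriel_filter_def by blast+

lemma right_module_env:
  "env_of_torsfree_quot R F M E j \<Longrightarrow> right_module R E"
  by (simp add: env_of_torsfree_quot_def injective_mod_def)

lemma env_of_torsfree_quot_ann_in_filter: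
  assumes M: "right_module R M" and F: "gabriel_filter R F"
    and env: "env_of_torsfree_quot R F M E j"
    and y: "y \<in> carrier E" "ann R E y \<in> F"
    and m: "m \<in> carrier M" and r: "r \<in> carrier R" and jm: "j m = y \<odot>\<^bsub>E\<^esub> r"
  shows "ann R M m \<in> F"
proof -
  have E: "right_module R E" using env by (rule right_module_env)
  interpret R: ring R by (rule rmod_ring[OF M])
  \<comment> \<open>Axiom T4 for J = (ann y : r): for a \<in> J, m a lies in the kernel of j, i.e. is torsion.\<close>
  have j_smult: "\<And>x a. x \<in> carrier M \<Longrightarrow> a \<in> carrier R \<Longrightarrow> j (x \<odot>\<^bsub>M\<^esub> a) = j x \<odot>\<^bsub>E\<^esub> a"
    and ker: "{x \<in> carrier M. j x = \<zero>\<^bsub>E\<^esub>} = tors R F M"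
    using env by (auto simp: env_of_torsfree_quot_def rmod_hom_def)
  have "rquot R (ann R M m) a \<in> F" if a: "a \<in> rquot R (ann R E y) r" for a
  proof -
    from a have a_in: "a \<in> carrier R" and "y \<odot>\<^bsub>E\<^esub> (r \<otimes>\<^bsub>R\<^esub> a) = \<zero>\<^bsub>E\<^esub>"
      by (auto simp: rquot_def ann_def)
    then have "j (m \<odot>\<^bsub>M\<^esub> a) = \<zero>\<^bsub>E\<^esub>"
      using j_smult[OF m a_in] jm rmod_smult_assoc[OF E y(1) r a_in] by simp
    then have "m \<odot>\<^bsub>M\<^esub> a \<in> tors R F M" using ker rmod_smult_closed[OF M m a_in] by blast
    then show ?thesis by (simp add: tors_def rquot_ann[OF M m a_in])
  qed
  then show ?thesis
    using gabriel_filter_transitive[OF F ann_right_ideal[OF M m] gabriel_filter_rquot[OF F y(2) r]]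
    by blast
qed

lemma env_of_torsfree_quot_torsion_free:
  assumes M: "right_module R M" and F: "gabriel_filter R F"
    and env: "env_of_torsfree_quot R F M E j"
    and y: "y \<in> carrier E" "ann R E y \<in> F"
  shows "y = \<zero>\<^bsub>E\<^esub>"
proof (rule ccontr)
  assume y_nonzero: "y \<noteq> \<zero>\<^bsub>E\<^esub>"
  have E: "right_module R E" using env by (rule right_module_env)
  interpret R: ring R by (rule rmod_ring[OF M])
  have ker: "{x \<in> carrier M. j x = \<zero>\<^bsub>E\<^esub>} = tors R F M"
    and ess: "essential R (j ` carrier M) E"
    using env by (auto simp: env_of_torsfree_quot_def)
  let ?S = "{y \<odot>\<^bsub>E\<^esub> r | r. r \<in> carrier R}"
  have S: "submodule R ?S E" by (rule submodule_cyclic[OF E y(1)])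
  have "y \<in> ?S" using rmod_smult_one[OF E y(1)] R.one_closed by force
  then have "?S \<inter> j ` carrier M \<noteq> {\<zero>\<^bsub>E\<^esub>}"
    using ess S y_nonzero by (auto simp: essential_def)
  moreover have "\<zero>\<^bsub>E\<^esub> \<in> ?S \<inter> j ` carrier M"
    using S ess by (simp add: essential_def submodule_def)
  ultimately obtain z where "z \<in> ?S" "z \<in> j ` carrier M" "z \<noteq> \<zero>\<^bsub>E\<^esub>"
    by blast
  then obtain r m where r: "r \<in> carrier R" and m: "m \<in> carrier M"
    and jm: "j m = y \<odot>\<^bsub>E\<^esub> r" and jm_nonzero: "j m \<noteq> \<zero>\<^bsub>E\<^esub>"
    by auto
  have "ann R M m \<in> F"
    by (rule env_of_torsfree_quot_ann_in_filter[OF M F env y m r jm])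
  then have "j m = \<zero>\<^bsub>E\<^esub>" using ker m by (auto simp: tors_def)
  with jm_nonzero show False ..
qed

lemma env_of_torsfree_quot_eq_if_smult_eq:
  assumes M: "right_module R M" and F: "gabriel_filter R F"
    and env: "env_of_torsfree_quot R F M E j"
    and uv: "u \<in> carrier E" "v \<in> carrier E" and I: "I \<in> F"
    and eq: "\<And>r. r \<in> I \<Longrightarrow> u \<odot>\<^bsub>E\<^esub> r = v \<odot>\<^bsub>E\<^esub> r"
  shows "u = v"
proof -
  have E: "right_module R E" using env by (rule right_module_env)
  interpret E: abelian_group E by (rule rmod_abelian_group[OF E])
  have I_carrier: "I \<subseteq> carrier R"
    using gabriel_filter_right_ideal[OF F I] by (simp add: right_ideal_def additive_subgroup.a_subset)
  have "I \<subseteq> ann R E (u \<ominus>\<^bsub>E\<^esub> v)"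
  proof
    fix r assume r: "r \<in> I"
    with I_carrier have r_in: "r \<in> carrier R" by blast
    have "(u \<ominus>\<^bsub>E\<^esub> v) \<odot>\<^bsub>E\<^esub> r = v \<odot>\<^bsub>E\<^esub> r \<ominus>\<^bsub>E\<^esub> v \<odot>\<^bsub>E\<^esub> r"
      using rmod_minus_smult[OF E uv r_in] eq[OF r] by simp
    also have "\<dots> = \<zero>\<^bsub>E\<^esub>"
      using rmod_smult_closed[OF E uv(2) r_in] by (simp add: a_minus_def E.r_neg)
    finally show "r \<in> ann R E (u \<ominus>\<^bsub>E\<^esub> v)" using r_in by (simp add: ann_def)
  qed
  then have "ann R E (u \<ominus>\<^bsub>E\<^esub> v) \<in> F"
    by (rule gabriel_filter_mono[OF F I ann_right_ideal[OF E E.minus_closed[OF uv]]])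
  then have "u \<ominus>\<^bsub>E\<^esub> v = \<zero>\<^bsub>E\<^esub>"
    by (rule env_of_torsfree_quot_torsion_free[OF M F env E.minus_closed[OF uv]])
  then show ?thesis
    using uv by (metis E.add.inv_closed E.add.inv_inv E.minus_equality a_minus_def)
qed

lemma quot_carrier_smult_closed:
  assumes M: "right_module R M" and F: "gabriel_filter R F"
    and env: "env_of_torsfree_quot R F M E j"
    and y: "y \<in> quot_carrier R F M E j" and r: "r \<in> carrier R"
  shows "y \<odot>\<^bsub>E\<^esub> r \<in> quot_carrier R F M E j"
proof -
  have E: "right_module R E" using env by (rule right_module_env)
  have y_in: "y \<in> carrier E" and yF: "{s \<in> carrier R. y \<odot>\<^bsub>E\<^esub> s \<in> j ` carrier M} \<in> F"
    using y by (auto simp: quot_carrier_def)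
  have "{s \<in> carrier R. (y \<odot>\<^bsub>E\<^esub> r) \<odot>\<^bsub>E\<^esub> s \<in> j ` carrier M}
      = rquot R {s \<in> carrier R. y \<odot>\<^bsub>E\<^esub> s \<in> j ` carrier M} r"
    using r rmod_ring[OF M] by (auto simp: rquot_def rmod_smult_assoc[OF E y_in] ring.ring_simprules(5))
  then show ?thesis
    using gabriel_filter_rquot[OF F yF r] rmod_smult_closed[OF E y_in r] by (simp add: quot_carrier_def)
qed

lemma right_module_mod_of_quot:
  assumes M: "right_module R M" and F: "gabriel_filter R F"
    and env: "env_of_torsfree_quot R F M E j"
  shows "right_module R (mod_of_quot R F M E j)"
proof -
  let ?Q = "quot_carrier R F M E j" and ?J = "j ` carrier M"
  have E: "right_module R E" using env by (rule right_module_env)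
  interpret R: ring R by (rule rmod_ring[OF M])
  interpret E: abelian_group E by (rule rmod_abelian_group[OF E])
  have J: "submodule R ?J E"
    using env by (simp add: env_of_torsfree_quot_def essential_def)
  define ideal where "ideal y = {r \<in> carrier R. y \<odot>\<^bsub>E\<^esub> r \<in> ?J}" for y
  have Q: "?Q = {y \<in> carrier E. ideal y \<in> F}"
    by (simp add: quot_carrier_def ideal_def)
  have Q_carrier: "?Q \<subseteq> carrier E" by (auto simp: Q)
  have Q_zero: "\<zero>\<^bsub>E\<^esub> \<in> ?Q"
  proof -
    have "ideal \<zero>\<^bsub>E\<^esub> = carrier R"
      using J by (auto simp: ideal_def submodule_def rmod_zero_smult[OF E])
    then show ?thesis using gabriel_filter_carrier[OF F] by (simp add: Q)
  qed
  have Q_add: "y \<oplus>\<^bsub>E\<^esub> z \<in> ?Q" if "y \<in> ?Q" "z \<in> ?Q" for y z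
  proof -
    have y: "y \<in> carrier E" "ideal y \<in> F" and z: "z \<in> carrier E" "ideal z \<in> F"
      using that by (auto simp: Q)
    have "ideal y \<inter> ideal z \<subseteq> ideal (y \<oplus>\<^bsub>E\<^esub> z)"
      using J by (auto simp: ideal_def submodule_def rmod_add_smult[OF E y(1) z(1)])
    then have "ideal (y \<oplus>\<^bsub>E\<^esub> z) \<in> F"
      using gabriel_filter_mono[OF F gabriel_filter_Int[OF F y(2) z(2)]]
        right_ideal_smult_preimage[OF E _ J] y z by (simp add: ideal_def)
    then show ?thesis using y z by (simp add: Q)
  qed
  have Q_uminus: "\<ominus>\<^bsub>E\<^esub> y \<in> ?Q" if "y \<in> ?Q" for y
  proof -
    have y: "y \<in> carrier E" "ideal y \<in> F" using that by (auto simp: Q)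
    have "ideal y \<subseteq> ideal (\<ominus>\<^bsub>E\<^esub> y)"
      using J by (auto simp: ideal_def submodule_def rmod_uminus_smult[OF E y(1)])
    then have "ideal (\<ominus>\<^bsub>E\<^esub> y) \<in> F"
      using gabriel_filter_mono[OF F y(2)] right_ideal_smult_preimage[OF E _ J] y
      by (simp add: ideal_def)
    then show ?thesis using y by (simp add: Q)
  qed
  have "abelian_group (mod_of_quot R F M E j)"
    unfolding mod_of_quot_def
  proof (rule abelian_groupI, goal_cases)
    case (1 x y) then show ?case using Q_add by simp
  next
    case 2 then show ?case using Q_zero by simp
  next
    case (3 x y z) then show ?case using Q_carrier by (simp add: subset_iff E.a_assoc)
  next
    case (4 x y) then show ?case using Q_carrier by (simp add: subset_iff E.a_comm)
  next
    case (5 x) then show ?case using Q_carrier by (simp add: subset_iff)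
  next
    case (6 x) then show ?case
      using Q_carrier Q_uminus by (auto simp: subset_iff intro!: bexI[of _ "\<ominus>\<^bsub>E\<^esub> x"] E.l_neg)
  qed
  then show ?thesis
    using E Q_carrier quot_carrier_smult_closed[OF M F env]
    by (auto simp: right_module_def mod_of_quot_def subset_iff)
qed

lemma rmod_hom_commutes_with_higher_delta_derivations:
  assumes N1: "right_module R N1" and N2: "right_module R N2"
    and \<delta>: "higher_derivation R \<delta>"
    and D1: "higher_delta_derivation R \<delta> N1 D1" and D2: "higher_delta_derivation R \<delta> N2 D2"
    and h: "rmod_hom R N1 N2 h"
    and x: "x \<in> carrier N1" and I: "I \<subseteq> carrier R"
    and agree: "\<And>r n. r \<in> I \<Longrightarrow> h (D1 n (x \<odot>\<^bsub>N1\<^esub> r)) = D2 n (h (x \<odot>\<^bsub>N1\<^esub> r))"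
    and separating: "\<And>u v. u \<in> carrier N2 \<Longrightarrow> v \<in> carrier N2 \<Longrightarrow>
       (\<And>r. r \<in> I \<Longrightarrow> u \<odot>\<^bsub>N2\<^esub> r = v \<odot>\<^bsub>N2\<^esub> r) \<Longrightarrow> u = v"
  shows "h (D1 n x) = D2 n (h x)"
proof (induction n rule: less_induct)
  case (less n)
  interpret N2: abelian_group N2 by (rule rmod_abelian_group[OF N2])
  have \<delta>_closed: "\<And>k r. r \<in> carrier R \<Longrightarrow> \<delta> k r \<in> carrier R"
    and \<delta>_0: "\<And>r. r \<in> carrier R \<Longrightarrow> \<delta> 0 r = r"
    using \<delta> by (auto simp: higher_derivation_def)
  have D1_closed: "\<And>k y. y \<in> carrier N1 \<Longrightarrow> D1 k y \<in> carrier N1"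
    and D1_smult: "\<And>k y r. y \<in> carrier N1 \<Longrightarrow> r \<in> carrier R \<Longrightarrow>
       D1 k (y \<odot>\<^bsub>N1\<^esub> r) = finsum N1 (\<lambda>i. D1 i y \<odot>\<^bsub>N1\<^esub> \<delta> (k - i) r) {..k}"
    using D1 by (auto simp: higher_delta_derivation_def)
  have D2_closed: "\<And>k y. y \<in> carrier N2 \<Longrightarrow> D2 k y \<in> carrier N2"
    and D2_smult: "\<And>k y r. y \<in> carrier N2 \<Longrightarrow> r \<in> carrier R \<Longrightarrow>
       D2 k (y \<odot>\<^bsub>N2\<^esub> r) = finsum N2 (\<lambda>i. D2 i y \<odot>\<^bsub>N2\<^esub> \<delta> (k - i) r) {..k}"
    using D2 by (auto simp: higher_delta_derivation_def)
  have h_closed: "\<And>y. y \<in> carrier N1 \<Longrightarrow> h y \<in> carrier N2"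
    and h_add: "\<And>y z. y \<in> carrier N1 \<Longrightarrow> z \<in> carrier N1 \<Longrightarrow> h (y \<oplus>\<^bsub>N1\<^esub> z) = h y \<oplus>\<^bsub>N2\<^esub> h z"
    and h_smult: "\<And>y r. y \<in> carrier N1 \<Longrightarrow> r \<in> carrier R \<Longrightarrow> h (y \<odot>\<^bsub>N1\<^esub> r) = h y \<odot>\<^bsub>N2\<^esub> r"
    using h by (auto simp: rmod_hom_def)
  have top_terms_eq: "h (D1 n x) \<odot>\<^bsub>N2\<^esub> r = D2 n (h x) \<odot>\<^bsub>N2\<^esub> r" if r: "r \<in> I" for r
  proof -
    have r_in: "r \<in> carrier R" using r I by blast
    let ?f = "\<lambda>i. h (D1 i x) \<odot>\<^bsub>N2\<^esub> \<delta> (n - i) r"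
      and ?g = "\<lambda>i. D2 i (h x) \<odot>\<^bsub>N2\<^esub> \<delta> (n - i) r"
    have "finsum N2 ?f {..n} = finsum N2 (h \<circ> (\<lambda>i. D1 i x \<odot>\<^bsub>N1\<^esub> \<delta> (n - i) r)) {..n}"
      by (rule N2.finsum_cong')
        (use h_smult D1_closed[OF x] \<delta>_closed[OF r_in] h_closed rmod_smult_closed[OF N2] in auto)
    also have "\<dots> = h (finsum N1 (\<lambda>i. D1 i x \<odot>\<^bsub>N1\<^esub> \<delta> (n - i) r) {..n})"
      by (rule sym, rule finsum_hom[OF rmod_abelian_group[OF N1] rmod_abelian_group[OF N2] h_closed h_add])
        (use D1_closed[OF x] rmod_smult_closed[OF N1] \<delta>_closed[OF r_in] in auto)
    also have "\<dots> = h (D1 n (x \<odot>\<^bsub>N1\<^esub> r))" by (simp add: D1_smult[OF x r_in])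
    also have "\<dots> = D2 n (h x \<odot>\<^bsub>N2\<^esub> r)" by (simp add: agree[OF r] h_smult[OF x r_in])
    also have "\<dots> = finsum N2 ?g {..n}" by (rule D2_smult[OF h_closed[OF x] r_in])
    finally have sums_eq: "finsum N2 ?f {..n} = finsum N2 ?g {..n}" .
    have "?f n = ?g n"
      by (rule finsum_atMost_eq_last[OF N2.abelian_group_axioms _ _ _ sums_eq])
        (use less.IH h_closed D1_closed D2_closed x rmod_smult_closed[OF N2] \<delta>_closed[OF r_in] in auto)
    then show ?thesis by (simp add: \<delta>_0[OF r_in])
  qed
  show ?case
    by (rule separating[OF h_closed[OF D1_closed[OF x]] D2_closed[OF h_closed[OF x]] top_terms_eq])
qed

theorem corollary4p1:
  fixes R :: "'a ring" and F1 F2 :: "'a set set" and \<delta> :: "nat \<Rightarrow> 'a \<Rightarrow> 'a"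
    and M :: "('a, 'b) rmodule" and d :: "nat \<Rightarrow> 'b \<Rightarrow> 'b"
    and E1 :: "('a, 'c) rmodule" and j1 :: "'b \<Rightarrow> 'c" and d1 :: "nat \<Rightarrow> 'c \<Rightarrow> 'c"
    and E2 :: "('a, 'e) rmodule" and j2 :: "'b \<Rightarrow> 'e" and d2 :: "nat \<Rightarrow> 'e \<Rightarrow> 'e"
    and q12 :: "'c \<Rightarrow> 'e"
  assumes "ring R"
    and "gabriel_filter R F1" and "gabriel_filter R F2" and "F1 \<subseteq> F2"
    and "higher_derivation R \<delta>"
    and "right_module R M" and "higher_delta_derivation R \<delta> M d"
    and "env_of_torsfree_quot R F1 M E1 j1"
    and "env_of_torsfree_quot R F2 M E2 j2"
    and "rmod_hom R (mod_of_quot R F1 M E1 j1) (mod_of_quot R F2 M E2 j2) q12"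
    and "\<forall>x\<in>carrier M. q12 (j1 x) = j2 x"
    and "higher_delta_derivation R \<delta> (mod_of_quot R F1 M E1 j1) d1"
    and "\<forall>n. \<forall>x\<in>carrier M. d1 n (j1 x) = j1 (d n x)"
    and "higher_delta_derivation R \<delta> (mod_of_quot R F2 M E2 j2) d2"
    and "\<forall>n. \<forall>x\<in>carrier M. d2 n (j2 x) = j2 (d n x)"
  shows "\<forall>n. \<forall>x\<in>quot_carrier R F1 M E1 j1. q12 (d1 n x) = d2 n (q12 x)"
proof (intro allI ballI)
  fix n x assume x: "x \<in> quot_carrier R F1 M E1 j1"
  define I where "I = {r \<in> carrier R. x \<odot>\<^bsub>E1\<^esub> r \<in> j1 ` carrier M}"
  have I_in: "I \<in> F2" using x assms(4) by (auto simp: I_def quot_carrier_def)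
  have d_closed: "\<And>k m. m \<in> carrier M \<Longrightarrow> d k m \<in> carrier M"
    using assms(7) by (simp add: higher_delta_derivation_def)
  have agree: "q12 (d1 k (x \<odot>\<^bsub>E1\<^esub> r)) = d2 k (q12 (x \<odot>\<^bsub>E1\<^esub> r))" if "r \<in> I" for r k
  proof -
    from that obtain m where "m \<in> carrier M" and "x \<odot>\<^bsub>E1\<^esub> r = j1 m" unfolding I_def by blast
    then show ?thesis using assms(11,13,15) d_closed by simp
  qed
  have separating: "u = v" if "u \<in> quot_carrier R F2 M E2 j2" "v \<in> quot_carrier R F2 M E2 j2"
    and "\<And>r. r \<in> I \<Longrightarrow> u \<odot>\<^bsub>E2\<^esub> r = v \<odot>\<^bsub>E2\<^esub> r" for u v
    using env_of_torsfree_quot_eq_if_smult_eq[OF assms(6,3,9) _ _ I_in] that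
    by (auto simp: quot_carrier_def)
  show "q12 (d1 n x) = d2 n (q12 x)"
    using rmod_hom_commutes_with_higher_delta_derivations[OF
        right_module_mod_of_quot[OF assms(6,2,8)] right_module_mod_of_quot[OF assms(6,3,9)]
        assms(5,12,14,10), of x I n] x agree separating
    by (simp add: mod_of_quot_def I_def)
qed

end
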